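(* Let $\|w\|_{L^\infty(\Omega)}\le\bar c_0\le\bar v/\sqrt5$, $\|w_x\|_{L^\infty(\Omega)}\le\bar c_1$, $\|w_{xx}\|_{L^\infty(\Omega)}\le\bar c_2$, and $\underline v^2:=\bar v^2-\bar c_0^2$. Then for any $\xi\in X$ and directions $\delta\xi,\widetilde{\delta\xi}\in\delta X$, the second directional derivative of $f$ satisfies (pointwise in $\tau$) $$|f''(\xi,\xi_\tau)[\delta\xi,\delta\xi_\tau][\widetilde{\delta\xi},\widetilde{\delta\xi}_\tau]|\le\bar\beta_0\|\xi_\tau\|\|\delta\xi\|\|\widetilde{\delta\xi}\|+\bar\beta_1\big(\|\delta\xi\|\|\widetilde{\delta\xi}_\tau\|+\|\delta\xi_\tau\|\|\widetilde{\delta\xi}\|\big)+\bar\beta_2\|\xi_\tau\|^{-1}\|\delta\xi_\tau\|\|\widetilde{\delta\xi}_\tau\|$$ with $\bar\beta_0=14\frac{\bar c_1^2}{\underline v^3}+4\frac{\bar c_2}{\underline v^2}$, $\bar\beta_1=7\frac{\bar c_1}{\underline v^2}$, $\bar\beta_2=\frac{4}{\underline v}$.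
   Context: Fix $\bar v>0$, $x_O\ne x_D\in\mathbb R^2$, and $w\in C^3(\mathbb R^2,\mathbb R^2)$ with $\|w(x)\|<\bar v$; $w_x,w_{xx}$ are its derivatives in operator norm; $\Omega\subset\mathbb R^2$ is an ellipse with foci $x_O,x_D$ containing every globally optimal trajectory, and $\|g\|_{L^\infty(\Omega)}$ is the essential supremum of the pointwise norm over $\Omega$. $f(x,p)=\frac{-p^Tw(x)+\sqrt{(p^Tw(x))^2+(\bar v^2-w(x)^Tw(x))p^Tp}}{\bar v^2-w(x)^Tw(x)}$; $f''(\xi,\xi_\tau)[\cdot][\cdot]$ is the second derivative of $f$ w.r.t. $(x,p)$ at $(\xi(\tau),\xi_\tau(\tau))$ applied to the directions $(\delta\xi(\tau),\delta\xi_\tau(\tau))$ and $(\widetilde{\delta\xi}(\tau),\widetilde{\delta\xi}_\tau(\tau))$. $X=\{\xi\in W^{1,\infty}(]0,1[,\mathbb R^2):\xi(0)=x_O,\xi(1)=x_D\}$, $\delta X=W_0^{1,\infty}(]0,1[,\mathbb R^2)$, subscript $\tau$ = derivative; $\|\cdot\|$ Euclidean norm. *)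

theory Defs
  imports "HOL-Analysis.Analysis"
begin

definition fcost :: "real \<Rightarrow> (real^2 \<Rightarrow> real^2) \<Rightarrow> real^2 \<Rightarrow> real^2 \<Rightarrow> real" where
  "fcost vbar w x p =
     (- (p \<bullet> w x) + sqrt ((p \<bullet> w x)^2 + (vbar^2 - w x \<bullet> w x) * (p \<bullet> p)))
     / (vbar^2 - w x \<bullet> w x)"

definition fcost2 :: "real \<Rightarrow> (real^2 \<Rightarrow> real^2) \<Rightarrow> real^2 \<Rightarrow> real^2
      \<Rightarrow> ((real^2) \<times> (real^2)) \<Rightarrow> ((real^2) \<times> (real^2)) \<Rightarrow> real" where
  "fcost2 vbar w x p u v =
     frechet_derivative
       (\<lambda>z. frechet_derivative (\<lambda>y. fcost vbar w (fst y) (snd y)) (at z) u)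
       (at (x, p)) v"

definition ellipse :: "real^2 \<Rightarrow> real^2 \<Rightarrow> real \<Rightarrow> (real^2) set" where
  "ellipse xO xD r = {x. dist x xO + dist x xD < r}"

end

theory Submission
  imports Defs
begin

text \<open>
  With q = p \<bullet> w x, D = vbar^2 - |w x|^2 and N = |p|^2 the integrand is
  f = (sqrt (q^2 + D N) - q) / D, so by the chain rule its second derivative is an explicit
  expression in q, D, N, their first variations in the two directions and their mixed second
  variation. Cauchy-Schwarz and the bounds on w, w_x, w_xx bound each of these. The hypothesis
  c0 \<le> vbar / sqrt 5 is what gives |w| \<le> vl/2 and vl^2 \<le> D \<le> 5/4 vl^2, hence
  vl |p| \<le> sqrt (q^2 + D N) \<le> 5/4 vl |p|. Estimating the four terms produced by the quotient
  rule separately and adding up gives the constants 14, 4, 7 and 4.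
\<close>

definition root_quot :: "real \<Rightarrow> real \<Rightarrow> real \<Rightarrow> real" where
  "root_quot q D N = (- q + sqrt (q^2 + D * N)) / D"

text \<open>Suffixes h and k mark first variations in two directions, hk the mixed second variation.\<close>

definition root_quot_deriv :: "real \<Rightarrow> real \<Rightarrow> real \<Rightarrow> real \<Rightarrow> real \<Rightarrow> real \<Rightarrow> real" where
  "root_quot_deriv q qh D Dh N Nh =
     (let S = sqrt (q^2 + D * N)
      in ((2*q*qh + Dh*N + D*Nh) / (2*S) - qh) / D - (S - q) * Dh / D^2)"

definition root_quot_deriv2 ::
    "real \<Rightarrow> real \<Rightarrow> real \<Rightarrow> real \<Rightarrow> real \<Rightarrow> real \<Rightarrow> real \<Rightarrow> real \<Rightarrow> real \<Rightarrow> real \<Rightarrow> real \<Rightarrow> real \<Rightarrow> real" where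
  "root_quot_deriv2 q qh qk qhk D Dh Dk Dhk N Nh Nk Nhk =
     (let S = sqrt (q^2 + D * N);
          Ph = 2*q*qh + Dh*N + D*Nh;
          Pk = 2*q*qk + Dk*N + D*Nk;
          Phk = 2*qk*qh + 2*q*qhk + Dhk*N + Dh*Nk + Dk*Nh + D*Nhk;
          Sh = Ph / (2*S);
          Sk = Pk / (2*S);
          Shk = Phk / (2*S) - Ph * Pk / (4 * S^3)
      in (Shk - qhk) / D - (Sh - qh) * Dk / D^2 - ((Sk - qk) * Dh + (S - q) * Dhk) / D^2
         + 2 * (S - q) * Dh * Dk / D^3)"

lemma has_derivative_root_quot:
  assumes "(q has_derivative dq) (at z)" "(D has_derivative dD) (at z)" "(N has_derivative dN) (at z)"
    and "D z \<noteq> 0" "0 < q z ^ 2 + D z * N z"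
  shows "((\<lambda>z. root_quot (q z) (D z) (N z)) has_derivative
           (\<lambda>h. root_quot_deriv (q z) (dq h) (D z) (dD h) (N z) (dN h))) (at z)"
  unfolding root_quot_def
  apply (rule derivative_eq_intros refl assms | simp add: assms)+
  apply (rule ext)
  apply (simp add: root_quot_deriv_def Let_def field_simps power2_eq_square)
  apply (simp add: add_divide_distrib[symmetric])
  done

lemma has_derivative_root_quot_deriv:
  assumes "(q has_derivative dq) (at z)" "(D has_derivative dD) (at z)" "(N has_derivative dN) (at z)"
    and "(qh has_derivative dqh) (at z)" "(Dh has_derivative dDh) (at z)" "(Nh has_derivative dNh) (at z)"
    and "D z \<noteq> 0" "0 < q z ^ 2 + D z * N z"
  shows "((\<lambda>z. root_quot_deriv (q z) (qh z) (D z) (Dh z) (N z) (Nh z)) has_derivative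
           (\<lambda>k. root_quot_deriv2 (q z) (qh z) (dq k) (dqh k) (D z) (Dh z) (dD k) (dDh k)
                  (N z) (Nh z) (dN k) (dNh k))) (at z)"
proof -
  have "sqrt (q z ^ 2 + D z * N z) \<noteq> 0" using assms(8) by simp
  then show ?thesis
    unfolding root_quot_deriv_def Let_def
    apply -
    apply (rule derivative_eq_intros refl assms | simp add: assms)+
    apply (rule ext)
    apply (simp add: root_quot_deriv2_def Let_def inverse_eq_divide power2_eq_square power3_eq_cube)
    apply (simp add: field_simps assms)
    done
qed

lemma has_derivative_fst_compose:
  assumes "\<And>x. (f has_derivative blinfun_apply (Df x)) (at x)"
  shows "((\<lambda>z. f (fst z)) has_derivative (\<lambda>h. Df (fst z) (fst h))) (at z)"
  using has_derivative_compose[OF has_derivative_fst[OF has_derivative_ident] assms[of "fst z"]]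
  by simp

lemma has_derivative_fst_compose_apply:
  assumes "\<And>x. (Df has_derivative blinfun_apply (D2f x)) (at x)"
  shows "((\<lambda>z. blinfun_apply (Df (fst z)) v) has_derivative (\<lambda>k. D2f (fst z) (fst k) v)) (at z)"
  using blinfun.FDERIV[OF has_derivative_fst_compose[OF assms] has_derivative_const[of v]] by simp

lemma has_derivative_inner_wind:
  fixes w :: "'a::real_normed_vector \<Rightarrow> 'b::real_inner"
  assumes w_deriv: "\<And>x. (w has_derivative blinfun_apply (Dw x)) (at x)"
  shows "((\<lambda>z::'a \<times> 'b. snd z \<bullet> w (fst z)) has_derivative
           (\<lambda>h. snd h \<bullet> w (fst z) + snd z \<bullet> Dw (fst z) (fst h))) (at z)"
  by (rule derivative_eq_intros has_derivative_fst_compose[OF w_deriv] refl | simp)+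
    (auto simp: inner_commute)

lemma has_derivative_inner_wind_deriv:
  fixes w :: "'a::real_normed_vector \<Rightarrow> 'b::real_inner"
  assumes w_deriv: "\<And>x. (w has_derivative blinfun_apply (Dw x)) (at x)"
    and Dw_deriv: "\<And>x. (Dw has_derivative blinfun_apply (D2w x)) (at x)"
  shows "((\<lambda>z::'a \<times> 'b. b \<bullet> w (fst z) + snd z \<bullet> Dw (fst z) a) has_derivative
           (\<lambda>k. b \<bullet> Dw (fst z) (fst k) + snd k \<bullet> Dw (fst z) a + snd z \<bullet> D2w (fst z) (fst k) a))
          (at z)"
  by (rule derivative_eq_intros has_derivative_fst_compose[OF w_deriv]
        has_derivative_fst_compose_apply[OF Dw_deriv] refl | simp)+
    (auto simp: algebra_simps inner_commute)

lemma has_derivative_airspeed_margin: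
  fixes w :: "'a::real_normed_vector \<Rightarrow> 'b::real_inner"
  assumes w_deriv: "\<And>x. (w has_derivative blinfun_apply (Dw x)) (at x)"
  shows "((\<lambda>z::'a \<times> 'c::real_normed_vector. vbar^2 - w (fst z) \<bullet> w (fst z)) has_derivative
           (\<lambda>h. -2 * (w (fst z) \<bullet> Dw (fst z) (fst h)))) (at z)"
  by (rule derivative_eq_intros has_derivative_fst_compose[OF w_deriv] refl | simp)+
    (auto simp: inner_commute)

lemma has_derivative_airspeed_margin_deriv:
  fixes w :: "'a::real_normed_vector \<Rightarrow> 'b::real_inner"
  assumes w_deriv: "\<And>x. (w has_derivative blinfun_apply (Dw x)) (at x)"
    and Dw_deriv: "\<And>x. (Dw has_derivative blinfun_apply (D2w x)) (at x)"
  shows "((\<lambda>z::'a \<times> 'c::real_normed_vector. -2 * (w (fst z) \<bullet> Dw (fst z) a)) has_derivative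
           (\<lambda>k. -2 * (Dw (fst z) (fst k) \<bullet> Dw (fst z) a + w (fst z) \<bullet> D2w (fst z) (fst k) a)))
          (at z)"
  by (rule derivative_eq_intros has_derivative_fst_compose[OF w_deriv]
        has_derivative_fst_compose_apply[OF Dw_deriv] refl | simp)+
    (auto simp: algebra_simps inner_commute)

lemma has_derivative_inner_snd_self:
  "((\<lambda>z::'a::real_normed_vector \<times> 'b::real_inner. snd z \<bullet> snd z) has_derivative
      (\<lambda>h. 2 * (snd z \<bullet> snd h))) (at z)"
  by (rule derivative_eq_intros refl | simp)+ (auto simp: inner_commute)

lemma has_derivative_inner_snd:
  "((\<lambda>z::'a::real_normed_vector \<times> 'b::real_inner. 2 * (snd z \<bullet> b)) has_derivative
      (\<lambda>k. 2 * (snd k \<bullet> b))) (at z)"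
  by (rule derivative_eq_intros refl | simp)+

lemma fcost_eq_root_quot: "fcost vbar w x p = root_quot (p \<bullet> w x) (vbar^2 - w x \<bullet> w x) (p \<bullet> p)"
  by (simp add: fcost_def root_quot_def)

lemma fcost2_eq_root_quot_deriv2:
  fixes w :: "real^2 \<Rightarrow> real^2"
  assumes w_small: "\<And>x. norm (w x) < vbar"
    and w_deriv: "\<And>x. (w has_derivative blinfun_apply (Dw x)) (at x)"
    and Dw_deriv: "\<And>x. (Dw has_derivative blinfun_apply (D2w x)) (at x)"
    and "p \<noteq> 0"
  shows "fcost2 vbar w x p (a, b) (c, d) =
    root_quot_deriv2 (p \<bullet> w x) (b \<bullet> w x + p \<bullet> Dw x a) (d \<bullet> w x + p \<bullet> Dw x c)
      (b \<bullet> Dw x c + d \<bullet> Dw x a + p \<bullet> D2w x c a)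
      (vbar^2 - w x \<bullet> w x) (-2 * (w x \<bullet> Dw x a)) (-2 * (w x \<bullet> Dw x c))
      (-2 * (Dw x c \<bullet> Dw x a + w x \<bullet> D2w x c a))
      (p \<bullet> p) (2 * (p \<bullet> b)) (2 * (p \<bullet> d)) (2 * (d \<bullet> b))"
proof -
  \<comment> \<open>f is differentiable only where p \<noteq> 0, so its first derivative is identified on this open set\<close>
  let ?U = "{z :: (real^2) \<times> (real^2). snd z \<noteq> 0}"
  have "open ?U"
    by (intro open_Collect_neq continuous_intros)
  have margin_pos: "0 < vbar^2 - w y \<bullet> w y" for y
    using power_strict_mono[OF w_small[of y] norm_ge_zero, of 2]
    by (simp add: power2_norm_eq_inner)
  have radicand_pos:
    "0 < (snd z \<bullet> w (fst z))^2 + (vbar^2 - w (fst z) \<bullet> w (fst z)) * (snd z \<bullet> snd z)"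
    if "z \<in> ?U" for z
    using that margin_pos[of "fst z"] by (simp add: add_nonneg_pos)
  note ingredients = has_derivative_inner_wind[OF w_deriv] has_derivative_airspeed_margin[OF w_deriv]
    has_derivative_inner_snd_self
  define G where "G z = root_quot_deriv (snd z \<bullet> w (fst z)) (b \<bullet> w (fst z) + snd z \<bullet> Dw (fst z) a)
    (vbar^2 - w (fst z) \<bullet> w (fst z)) (-2 * (w (fst z) \<bullet> Dw (fst z) a))
    (snd z \<bullet> snd z) (2 * (snd z \<bullet> b))" for z
  have first_variation:
    "frechet_derivative (\<lambda>y. fcost vbar w (fst y) (snd y)) (at z) (a, b) = G z" if "z \<in> ?U" for z
    using fun_cong[OF frechet_derivative_at[OF has_derivative_root_quot[OF ingredients
          less_imp_neq[OF margin_pos, symmetric] radicand_pos[OF that]]], of "(a, b)"]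
    by (simp add: fcost_eq_root_quot G_def)
  have "(G has_derivative (\<lambda>k. root_quot_deriv2 (p \<bullet> w x) (b \<bullet> w x + p \<bullet> Dw x a)
      (snd k \<bullet> w x + p \<bullet> Dw x (fst k)) (b \<bullet> Dw x (fst k) + snd k \<bullet> Dw x a + p \<bullet> D2w x (fst k) a)
      (vbar^2 - w x \<bullet> w x) (-2 * (w x \<bullet> Dw x a)) (-2 * (w x \<bullet> Dw x (fst k)))
      (-2 * (Dw x (fst k) \<bullet> Dw x a + w x \<bullet> D2w x (fst k) a))
      (p \<bullet> p) (2 * (p \<bullet> b)) (2 * (p \<bullet> snd k)) (2 * (snd k \<bullet> b)))) (at (x, p))"
    (is "(G has_derivative ?G2) _")
    unfolding G_def
    using has_derivative_root_quot_deriv[OF ingredients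
        has_derivative_inner_wind_deriv[OF w_deriv Dw_deriv]
        has_derivative_airspeed_margin_deriv[OF w_deriv Dw_deriv] has_derivative_inner_snd
        less_imp_neq[OF margin_pos, symmetric] radicand_pos, of "(x, p)"] \<open>p \<noteq> 0\<close>
    by simp
  then have "((\<lambda>z. frechet_derivative (\<lambda>y. fcost vbar w (fst y) (snd y)) (at z) (a, b))
      has_derivative ?G2) (at (x, p))"
    by (rule has_derivative_transform_within_open[where s = ?U])
      (use \<open>open ?U\<close> \<open>p \<noteq> 0\<close> first_variation in auto)
  then show ?thesis
    unfolding fcost2_def by (simp add: frechet_derivative_at[symmetric])
qed

lemma abs_mult_le_mult:
  fixes x y :: "'a::linordered_idom"
  shows "\<bar>x\<bar> \<le> X \<Longrightarrow> \<bar>y\<bar> \<le> Y \<Longrightarrow> \<bar>x * y\<bar> \<le> X * Y"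
  by (simp add: abs_mult mult_mono')

lemma abs_divide_le_divide:
  fixes x :: "'a::linordered_field"
  assumes "\<bar>x\<bar> \<le> X" "0 < y" "y \<le> Y"
  shows "\<bar>x / Y\<bar> \<le> X / y"
proof -
  have "\<bar>x / Y\<bar> = \<bar>x\<bar> / Y" using assms by simp
  also have "\<dots> \<le> X / y" using assms by (intro frac_le) auto
  finally show ?thesis .
qed

lemma abs_radicand_variation_le:
  fixes vl P na nb c1 q qh D Dh N Nh :: real
  assumes "0 \<le> vl" "0 \<le> P" "N = P^2" "\<bar>D\<bar> \<le> 5/4 * vl^2"
    and "\<bar>q\<bar> \<le> vl/2 * P" "\<bar>qh\<bar> \<le> vl/2 * nb + c1 * P * na"
    and "\<bar>Dh\<bar> \<le> vl * c1 * na" "\<bar>Nh\<bar> \<le> 2 * P * nb"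
  shows "\<bar>2*q*qh + Dh*N + D*Nh\<bar> \<le> vl * P * (3 * vl * nb + 2 * c1 * P * na)"
proof -
  have "\<bar>2*q\<bar> \<le> vl * P" using assms by simp
  from abs_mult_le_mult[OF this assms(6)] abs_mult_le_mult[OF assms(7), of N "P^2"]
    abs_mult_le_mult[OF assms(4,8)]
  have "\<bar>2*q*qh + Dh*N + D*Nh\<bar>
      \<le> vl * P * (vl/2 * nb + c1 * P * na) + vl * c1 * na * P^2 + 5/4 * vl^2 * (2 * P * nb)"
    using assms(3) by (simp add: abs_le_iff) linarith
  also have "\<dots> = vl * P * (3 * vl * nb + 2 * c1 * P * na)"
    by (simp add: algebra_simps power2_eq_square)
  finally show ?thesis .
qed

text \<open>
  In the application P = |p|, na, nb, nc, nd are the norms of the directions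
  \<delta>\<xi>, \<delta>\<xi>_\<tau>, \<delta>\<xi>', \<delta>\<xi>'_\<tau>, and vl is the lower airspeed bound.
\<close>

locale root_quot_estimates =
  fixes vl c1 c2 P na nb nc nd :: real
    and q qh qk qhk D Dh Dk Dhk N Nh Nk Nhk :: real
  assumes vl_pos: "0 < vl" and P_pos: "0 < P" and N_eq: "N = P^2"
    and nonneg: "0 \<le> na" "0 \<le> nb" "0 \<le> nc" "0 \<le> nd" "0 \<le> c1" "0 \<le> c2"
    and q_bound: "\<bar>q\<bar> \<le> vl/2 * P"
    and qh_bound: "\<bar>qh\<bar> \<le> vl/2 * nb + c1 * P * na"
    and qk_bound: "\<bar>qk\<bar> \<le> vl/2 * nd + c1 * P * nc"
    and qhk_bound: "\<bar>qhk\<bar> \<le> c1 * (nb * nc + na * nd) + c2 * P * na * nc"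
    and D_lower: "vl^2 \<le> D" and D_upper: "D \<le> 5/4 * vl^2"
    and Dh_bound: "\<bar>Dh\<bar> \<le> vl * c1 * na"
    and Dk_bound: "\<bar>Dk\<bar> \<le> vl * c1 * nc"
    and Dhk_bound: "\<bar>Dhk\<bar> \<le> (2 * c1^2 + vl * c2) * na * nc"
    and Nh_bound: "\<bar>Nh\<bar> \<le> 2 * P * nb"
    and Nk_bound: "\<bar>Nk\<bar> \<le> 2 * P * nd"
    and Nhk_bound: "\<bar>Nhk\<bar> \<le> 2 * nb * nd"
begin

abbreviation S where "S \<equiv> sqrt (q^2 + D * N)"
abbreviation Ph where "Ph \<equiv> 2*q*qh + Dh*N + D*Nh"
abbreviation Pk where "Pk \<equiv> 2*q*qk + Dk*N + D*Nk"
abbreviation Phk where "Phk \<equiv> 2*qk*qh + 2*q*qhk + Dhk*N + Dh*Nk + Dk*Nh + D*Nhk"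
abbreviation Eh where "Eh \<equiv> 3 * vl * nb + 2 * c1 * P * na"
abbreviation Ek where "Ek \<equiv> 3 * vl * nd + 2 * c1 * P * nc"

lemma D_pos: "0 < D"
  using D_lower zero_less_power[OF vl_pos, of 2] by linarith

lemma sqrt_radicand_bounds: "vl * P \<le> S" "S \<le> 5/4 * vl * P"
proof -
  have "(vl * P)^2 \<le> D * N"
    using mult_right_mono[OF D_lower, of N] by (simp add: N_eq power_mult_distrib)
  then show "vl * P \<le> S"
    using vl_pos P_pos by (intro real_le_rsqrt) (simp add: add_increasing)
  have "q^2 \<le> (vl/2 * P)^2"
    using q_bound by (metis abs_ge_zero power2_abs power_mono)
  moreover have "D * N \<le> 5/4 * vl^2 * P^2"
    using mult_right_mono[OF D_upper, of N] by (simp add: N_eq)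
  moreover have "(vl/2 * P)^2 = 1/4 * (vl * P)^2" "(5/4 * vl * P)^2 = 25/16 * (vl * P)^2"
    "5/4 * vl^2 * P^2 = 5/4 * (vl * P)^2"
    by (simp_all add: power_mult_distrib power_divide)
  ultimately have "q^2 + D * N \<le> (5/4 * vl * P)^2"
    using zero_le_power2[of "vl * P"] by linarith
  then show "S \<le> 5/4 * vl * P"
    using vl_pos P_pos by (intro real_le_lsqrt) simp_all
qed

lemma radicand_variation_bounds: "\<bar>Ph\<bar> \<le> vl * P * Eh" "\<bar>Pk\<bar> \<le> vl * P * Ek"
  using abs_radicand_variation_le[OF _ _ N_eq _ q_bound qh_bound Dh_bound Nh_bound]
    abs_radicand_variation_le[OF _ _ N_eq _ q_bound qk_bound Dk_bound Nk_bound]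
    vl_pos P_pos D_pos D_upper by simp_all

abbreviation M where
  "M \<equiv> 2 * (vl/2 * nb + c1 * P * na) * (vl/2 * nd + c1 * P * nc)
     + vl * P * (c1 * (nb * nc + na * nd) + c2 * P * na * nc) + (2 * c1^2 + vl * c2) * na * nc * P^2
     + vl * c1 * na * (2 * P * nd) + vl * c1 * nc * (2 * P * nb) + 5/4 * vl^2 * (2 * nb * nd)"

lemma radicand_second_variation_bound: "\<bar>Phk\<bar> \<le> M"
proof -
  have "\<bar>2*qk\<bar> \<le> 2 * (vl/2 * nd + c1 * P * nc)" "\<bar>2*q\<bar> \<le> vl * P" "\<bar>N\<bar> \<le> P^2"
    "\<bar>D\<bar> \<le> 5/4 * vl^2"
    using qk_bound q_bound N_eq D_pos D_upper by simp_all
  from abs_mult_le_mult[OF this(1) qh_bound] abs_mult_le_mult[OF this(2) qhk_bound]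
    abs_mult_le_mult[OF Dhk_bound this(3)] abs_mult_le_mult[OF Dh_bound Nk_bound]
    abs_mult_le_mult[OF Dk_bound Nh_bound] abs_mult_le_mult[OF this(4) Nhk_bound]
  show ?thesis by (simp add: algebra_simps)
qed

lemma sqrt_variation_bounds:
  "\<bar>Ph / (2*S)\<bar> \<le> Eh / 2" "\<bar>Pk / (2*S)\<bar> \<le> Ek / 2"
  "\<bar>Phk / (2*S) - Ph * Pk / (4 * S^3)\<bar> \<le> M / (2 * (vl * P)) + Eh * Ek / (4 * (vl * P))"
proof -
  have vP: "0 < vl * P" using vl_pos P_pos by simp
  note S_lower = sqrt_radicand_bounds(1)
  have "\<bar>Ph / (2*S)\<bar> \<le> vl * P * Eh / (2 * (vl * P))"
    by (rule abs_divide_le_divide[OF radicand_variation_bounds(1)]) (use vP S_lower in auto)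
  also have "\<dots> = Eh / 2" using vl_pos P_pos by simp
  finally show "\<bar>Ph / (2*S)\<bar> \<le> Eh / 2" .
  have "\<bar>Pk / (2*S)\<bar> \<le> vl * P * Ek / (2 * (vl * P))"
    by (rule abs_divide_le_divide[OF radicand_variation_bounds(2)]) (use vP S_lower in auto)
  also have "\<dots> = Ek / 2" using vl_pos P_pos by simp
  finally show "\<bar>Pk / (2*S)\<bar> \<le> Ek / 2" .
  have "\<bar>Phk / (2*S)\<bar> \<le> M / (2 * (vl * P))"
    by (rule abs_divide_le_divide[OF radicand_second_variation_bound]) (use vP S_lower in auto)
  moreover have "\<bar>Ph * Pk / (4 * S^3)\<bar> \<le> (vl * P * Eh) * (vl * P * Ek) / (4 * (vl * P)^3)"
    by (rule abs_divide_le_divide[OF abs_mult_le_mult[OF radicand_variation_bounds]])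
      (use vP S_lower power_mono[OF S_lower, of 3] in auto)
  moreover have "\<dots> = Eh * Ek / (4 * (vl * P))"
    using vl_pos P_pos by (simp add: field_simps power3_eq_cube)
  ultimately show "\<bar>Phk / (2*S) - Ph * Pk / (4 * S^3)\<bar> \<le> M / (2 * (vl * P)) + Eh * Ek / (4 * (vl * P))"
    by linarith
qed

lemma abs_sqrt_radicand_diff_le: "\<bar>S - q\<bar> \<le> 7/4 * vl * P"
  using sqrt_radicand_bounds q_bound real_sqrt_ge_zero[of "q^2 + D * N"] by linarith

lemma D_power_lower: "vl^4 \<le> D^2" "vl^6 \<le> D^3"
  using power_mono[OF D_lower zero_le_power2, of 2] power_mono[OF D_lower zero_le_power2, of 3]
  by (simp_all add: power_mult[symmetric])

lemma first_term_bound: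
  "\<bar>(Phk / (2*S) - Ph * Pk / (4 * S^3) - qhk) / D\<bar>
     \<le> 3 * (c1^2 / vl^3 * P * na * nc) + 2 * (c2 / vl^2 * P * na * nc)
       + 9/2 * (c1 / vl^2 * na * nd) + 9/2 * (c1 / vl^2 * nb * nc) + 15/4 * (nb * nd / (vl * P))"
proof -
  have "\<bar>Phk / (2*S) - Ph * Pk / (4 * S^3) - qhk\<bar>
      \<le> M / (2 * (vl * P)) + Eh * Ek / (4 * (vl * P)) + (c1 * (nb * nc + na * nd) + c2 * P * na * nc)"
    using sqrt_variation_bounds(3) qhk_bound by linarith
  from abs_divide_le_divide[OF this _ D_lower]
  have "\<bar>(Phk / (2*S) - Ph * Pk / (4 * S^3) - qhk) / D\<bar>
      \<le> (M / (2 * (vl * P)) + Eh * Ek / (4 * (vl * P)) + (c1 * (nb * nc + na * nd) + c2 * P * na * nc))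
         / vl^2"
    using vl_pos by simp
  also have "\<dots> = 3 * (c1^2 / vl^3 * P * na * nc) + 2 * (c2 / vl^2 * P * na * nc)
       + 9/2 * (c1 / vl^2 * na * nd) + 9/2 * (c1 / vl^2 * nb * nc) + 15/4 * (nb * nd / (vl * P))"
    using vl_pos P_pos by (simp add: field_simps power2_eq_square power3_eq_cube)
  finally show ?thesis .
qed

lemma second_term_bound:
  "\<bar>(Ph / (2*S) - qh) * Dk / D^2\<bar> \<le> 2 * (c1^2 / vl^3 * P * na * nc) + 2 * (c1 / vl^2 * nb * nc)"
proof -
  have "\<bar>Ph / (2*S) - qh\<bar> \<le> Eh / 2 + (vl/2 * nb + c1 * P * na)"
    using sqrt_variation_bounds(1) qh_bound by linarith
  from abs_divide_le_divide[OF abs_mult_le_mult[OF this Dk_bound] _ D_power_lower(1)]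
  have "\<bar>(Ph / (2*S) - qh) * Dk / D^2\<bar> \<le> (Eh / 2 + (vl/2 * nb + c1 * P * na)) * (vl * c1 * nc) / vl^4"
    using vl_pos by simp
  also have "\<dots> = 2 * (c1^2 / vl^3 * P * na * nc) + 2 * (c1 / vl^2 * nb * nc)"
    using vl_pos by (simp add: field_simps power2_eq_square power3_eq_cube eval_nat_numeral)
  finally show ?thesis .
qed

lemma third_term_bound:
  "\<bar>((Pk / (2*S) - qk) * Dh + (S - q) * Dhk) / D^2\<bar>
     \<le> 11/2 * (c1^2 / vl^3 * P * na * nc) + 7/4 * (c2 / vl^2 * P * na * nc) + 2 * (c1 / vl^2 * na * nd)"
proof -
  have "\<bar>Pk / (2*S) - qk\<bar> \<le> Ek / 2 + (vl/2 * nd + c1 * P * nc)"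
    using sqrt_variation_bounds(2) qk_bound by linarith
  from abs_mult_le_mult[OF this Dh_bound] abs_mult_le_mult[OF abs_sqrt_radicand_diff_le Dhk_bound]
  have "\<bar>(Pk / (2*S) - qk) * Dh + (S - q) * Dhk\<bar>
      \<le> (Ek / 2 + (vl/2 * nd + c1 * P * nc)) * (vl * c1 * na) + 7/4 * vl * P * ((2 * c1^2 + vl * c2) * na * nc)"
    by linarith
  from abs_divide_le_divide[OF this _ D_power_lower(1)]
  have "\<bar>((Pk / (2*S) - qk) * Dh + (S - q) * Dhk) / D^2\<bar>
      \<le> ((Ek / 2 + (vl/2 * nd + c1 * P * nc)) * (vl * c1 * na)
          + 7/4 * vl * P * ((2 * c1^2 + vl * c2) * na * nc)) / vl^4"
    using vl_pos by simp
  also have "\<dots> = 11/2 * (c1^2 / vl^3 * P * na * nc) + 7/4 * (c2 / vl^2 * P * na * nc)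
      + 2 * (c1 / vl^2 * na * nd)"
    using vl_pos by (simp add: field_simps power2_eq_square power3_eq_cube eval_nat_numeral)
  finally show ?thesis .
qed

lemma fourth_term_bound: "\<bar>2 * (S - q) * Dh * Dk / D^3\<bar> \<le> 7/2 * (c1^2 / vl^3 * P * na * nc)"
proof -
  have "\<bar>2 * (S - q)\<bar> \<le> 2 * (7/4 * vl * P)"
    by (rule abs_mult_le_mult[OF _ abs_sqrt_radicand_diff_le]) simp
  from abs_divide_le_divide[OF abs_mult_le_mult[OF abs_mult_le_mult[OF this Dh_bound] Dk_bound] _
      D_power_lower(2)]
  have "\<bar>2 * (S - q) * Dh * Dk / D^3\<bar> \<le> 2 * (7/4 * vl * P) * (vl * c1 * na) * (vl * c1 * nc) / vl^6"
    using vl_pos by simp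
  also have "\<dots> = 7/2 * (c1^2 / vl^3 * P * na * nc)"
    using vl_pos by (simp add: field_simps power2_eq_square power3_eq_cube eval_nat_numeral)
  finally show ?thesis .
qed

lemma root_quot_deriv2_bound:
  "\<bar>root_quot_deriv2 q qh qk qhk D Dh Dk Dhk N Nh Nk Nhk\<bar>
     \<le> (14 * c1^2 / vl^3 + 4 * c2 / vl^2) * P * na * nc + 7 * c1 / vl^2 * (na * nd + nb * nc)
       + 4 / vl * inverse P * nb * nd"
proof -
  have combine: "\<bar>t1 - t2 - t3 + t4\<bar> \<le> 14 * a1 + 4 * a2 + 7 * a3 + 7 * a4 + 4 * a5"
    if "\<bar>t1\<bar> \<le> 3 * a1 + 2 * a2 + 9/2 * a3 + 9/2 * a4 + 15/4 * a5" "\<bar>t2\<bar> \<le> 2 * a1 + 2 * a4"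
      "\<bar>t3\<bar> \<le> 11/2 * a1 + 7/4 * a2 + 2 * a3" "\<bar>t4\<bar> \<le> 7/2 * a1"
      "0 \<le> a2" "0 \<le> a3" "0 \<le> a4" "0 \<le> a5"
    for t1 t2 t3 t4 a1 a2 a3 a4 a5 :: real
    using that by linarith
  have "(14 * c1^2 / vl^3 + 4 * c2 / vl^2) * P * na * nc + 7 * c1 / vl^2 * (na * nd + nb * nc)
       + 4 / vl * inverse P * nb * nd
     = 14 * (c1^2 / vl^3 * P * na * nc) + 4 * (c2 / vl^2 * P * na * nc)
       + 7 * (c1 / vl^2 * na * nd) + 7 * (c1 / vl^2 * nb * nc) + 4 * (nb * nd / (vl * P))"
    by (simp add: algebra_simps add_divide_distrib divide_inverse)
  moreover have "0 \<le> c2 / vl^2 * P * na * nc" "0 \<le> c1 / vl^2 * na * nd" "0 \<le> c1 / vl^2 * nb * nc"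
    "0 \<le> nb * nd / (vl * P)"
    using vl_pos P_pos nonneg by simp_all
  ultimately show ?thesis
    unfolding root_quot_deriv2_def Let_def
    using combine[OF first_term_bound second_term_bound third_term_bound fourth_term_bound] by simp
qed

end

lemma abs_inner_le_mult:
  assumes "norm u \<le> U" "norm v \<le> V"
  shows "\<bar>u \<bullet> v\<bar> \<le> U * V"
proof -
  have "0 \<le> U" using assms(1) norm_ge_zero order_trans by blast
  then show ?thesis
    using order_trans[OF Cauchy_Schwarz_ineq2 mult_mono[OF assms]] by simp
qed

lemma norm_blinfun_apply_le: "norm A \<le> c \<Longrightarrow> norm (blinfun_apply A h) \<le> c * norm h"
  by (rule order_trans[OF norm_blinfun mult_right_mono]) auto

lemma norm_blinfun_apply2_le:
  "norm B \<le> c \<Longrightarrow> norm (blinfun_apply (blinfun_apply B k) h) \<le> c * norm k * norm h"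
  by (rule order_trans[OF norm_blinfun mult_right_mono[OF norm_blinfun_apply_le]]) auto

lemma lower_airspeed_bounds:
  fixes vbar c0 :: real
  assumes "0 < vbar" "0 \<le> c0" "c0 \<le> vbar / sqrt 5"
  shows "0 < sqrt (vbar^2 - c0^2)" "c0 \<le> sqrt (vbar^2 - c0^2) / 2"
    "(sqrt (vbar^2 - c0^2))^2 = vbar^2 - c0^2" "vbar^2 \<le> 5/4 * (sqrt (vbar^2 - c0^2))^2"
proof -
  have c0_sq: "5 * c0^2 \<le> vbar^2"
    using power_mono[OF assms(3,2), of 2] by (simp add: power_divide)
  have "0 < vbar^2" using assms(1) by simp
  then have margin_pos: "0 < vbar^2 - c0^2"
    using c0_sq zero_le_power2[of c0] by linarith
  then show "0 < sqrt (vbar^2 - c0^2)" "(sqrt (vbar^2 - c0^2))^2 = vbar^2 - c0^2"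
    by simp_all
  then show "vbar^2 \<le> 5/4 * (sqrt (vbar^2 - c0^2))^2"
    using c0_sq by simp
  have "(2 * c0)^2 \<le> vbar^2 - c0^2"
    using c0_sq by (simp add: power_mult_distrib)
  then show "c0 \<le> sqrt (vbar^2 - c0^2) / 2"
    by (simp add: real_le_rsqrt)
qed

lemma root_quot_estimates_wind:
  fixes W :: "'a::real_inner" and A :: "'b::real_normed_vector \<Rightarrow>\<^sub>L 'a"
    and B :: "'b \<Rightarrow>\<^sub>L 'b \<Rightarrow>\<^sub>L 'a"
  assumes "0 < vbar" "norm W \<le> c0" "c0 \<le> vbar / sqrt 5" "norm A \<le> c1" "norm B \<le> c2" "p \<noteq> 0"
  shows "root_quot_estimates (sqrt (vbar^2 - c0^2)) c1 c2 (norm p) (norm a) (norm b) (norm c) (norm d)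
    (p \<bullet> W) (b \<bullet> W + p \<bullet> A a) (d \<bullet> W + p \<bullet> A c) (b \<bullet> A c + d \<bullet> A a + p \<bullet> B c a)
    (vbar^2 - W \<bullet> W) (-2 * (W \<bullet> A a)) (-2 * (W \<bullet> A c)) (-2 * (A c \<bullet> A a + W \<bullet> B c a))
    (p \<bullet> p) (2 * (p \<bullet> b)) (2 * (p \<bullet> d)) (2 * (d \<bullet> b))"
proof -
  define vl where "vl = sqrt (vbar^2 - c0^2)"
  have "0 \<le> c0" using assms(2) norm_ge_zero order_trans by blast
  note vl = lower_airspeed_bounds[OF assms(1) this assms(3), folded vl_def]
  have W: "norm W \<le> vl/2" using assms(2) vl(2) by linarith
  have A: "norm (A h) \<le> c1 * norm h" for h using assms(4) by (rule norm_blinfun_apply_le)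
  have B: "norm (B k h) \<le> c2 * norm k * norm h" for k h using assms(5) by (rule norm_blinfun_apply2_le)
  have WW: "W \<bullet> W = (norm W)^2" by (simp add: power2_norm_eq_inner)
  show ?thesis
    unfolding vl_def[symmetric]
  proof unfold_locales
    show "\<bar>p \<bullet> W\<bar> \<le> vl/2 * norm p"
      using abs_inner_le_mult[OF order_refl W] by (simp add: mult.commute)
    show "\<bar>b \<bullet> W + p \<bullet> A a\<bar> \<le> vl/2 * norm b + c1 * norm p * norm a"
      using abs_inner_le_mult[OF order_refl W, of b] abs_inner_le_mult[OF order_refl A, of p a]
      by (simp add: algebra_simps)
    show "\<bar>d \<bullet> W + p \<bullet> A c\<bar> \<le> vl/2 * norm d + c1 * norm p * norm c"
      using abs_inner_le_mult[OF order_refl W, of d] abs_inner_le_mult[OF order_refl A, of p c]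
      by (simp add: algebra_simps)
    show "\<bar>b \<bullet> A c + d \<bullet> A a + p \<bullet> B c a\<bar>
        \<le> c1 * (norm b * norm c + norm a * norm d) + c2 * norm p * norm a * norm c"
      using abs_inner_le_mult[OF order_refl A, of b c] abs_inner_le_mult[OF order_refl A, of d a]
        abs_inner_le_mult[OF order_refl B, of p c a]
      by (simp add: algebra_simps)
    show "vl^2 \<le> vbar^2 - W \<bullet> W" "vbar^2 - W \<bullet> W \<le> 5/4 * vl^2"
      using power_mono[OF assms(2) norm_ge_zero, of 2] vl(3,4) zero_le_power2[of "norm W"]
      unfolding WW by linarith+
    show "\<bar>-2 * (W \<bullet> A a)\<bar> \<le> vl * c1 * norm a" "\<bar>-2 * (W \<bullet> A c)\<bar> \<le> vl * c1 * norm c"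
      using abs_inner_le_mult[OF W A, of a] abs_inner_le_mult[OF W A, of c] by (simp_all add: abs_mult)
    show "\<bar>-2 * (A c \<bullet> A a + W \<bullet> B c a)\<bar> \<le> (2 * c1^2 + vl * c2) * norm a * norm c"
      using abs_inner_le_mult[OF A A, of c a] abs_inner_le_mult[OF W B, of c a]
      by (simp add: abs_mult algebra_simps power2_eq_square)
    show "\<bar>2 * (p \<bullet> b)\<bar> \<le> 2 * norm p * norm b" "\<bar>2 * (p \<bullet> d)\<bar> \<le> 2 * norm p * norm d"
      "\<bar>2 * (d \<bullet> b)\<bar> \<le> 2 * norm b * norm d"
      using Cauchy_Schwarz_ineq2[of p b] Cauchy_Schwarz_ineq2[of p d] Cauchy_Schwarz_ineq2[of d b]
      by (simp_all add: abs_mult mult.commute)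
  qed (use vl(1) assms norm_ge_zero[THEN order_trans] in \<open>auto simp: power2_norm_eq_inner\<close>)
qed

lemma abs_fcost2_le:
  fixes w :: "real^2 \<Rightarrow> real^2"
  assumes "\<And>x. norm (w x) < vbar"
    and "\<And>x. (w has_derivative blinfun_apply (Dw x)) (at x)"
    and "\<And>x. (Dw has_derivative blinfun_apply (D2w x)) (at x)"
    and "0 < vbar" "norm (w x) \<le> c0" "c0 \<le> vbar / sqrt 5" "norm (Dw x) \<le> c1" "norm (D2w x) \<le> c2"
    and "vl = sqrt (vbar^2 - c0^2)" "p \<noteq> 0"
  shows "\<bar>fcost2 vbar w x p (a, b) (c, d)\<bar>
    \<le> (14 * c1^2 / vl^3 + 4 * c2 / vl^2) * norm p * norm a * norm c
      + 7 * c1 / vl^2 * (norm a * norm d + norm b * norm c) + 4 / vl * inverse (norm p) * norm b * norm d"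
  unfolding fcost2_eq_root_quot_deriv2[OF assms(1-3,10)] assms(9)
  by (rule root_quot_estimates.root_quot_deriv2_bound[OF root_quot_estimates_wind[OF assms(4-8,10)]])

theorem lemma12:
  fixes vbar c0 c1 c2 r :: real
    and xO xD :: "real^2"
    and w :: "real^2 \<Rightarrow> real^2"
    and Dw :: "real^2 \<Rightarrow> ((real^2) \<Rightarrow>\<^sub>L (real^2))"
    and D2w :: "real^2 \<Rightarrow> ((real^2) \<Rightarrow>\<^sub>L ((real^2) \<Rightarrow>\<^sub>L (real^2)))"
    and D3w :: "real^2 \<Rightarrow> ((real^2) \<Rightarrow>\<^sub>L ((real^2) \<Rightarrow>\<^sub>L ((real^2) \<Rightarrow>\<^sub>L (real^2))))"
    and \<Omega> :: "(real^2) set"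
  assumes vbar_pos: "vbar > 0"
    and foci: "xO \<noteq> xD"
    and w_small: "\<forall>x. norm (w x) < vbar"
    and w_d1: "\<forall>x. (w has_derivative blinfun_apply (Dw x)) (at x)"
    and w_d2: "\<forall>x. (Dw has_derivative blinfun_apply (D2w x)) (at x)"
    and w_d3: "\<forall>x. (D2w has_derivative blinfun_apply (D3w x)) (at x)"
    and w_C3: "continuous_on UNIV D3w"
    and ellipse: "r > dist xO xD" "\<Omega> = ellipse xO xD r"
    and c0_bound: "\<forall>x\<in>\<Omega>. norm (w x) \<le> c0" "c0 \<le> vbar / sqrt 5"
    and c1_bound: "\<forall>x\<in>\<Omega>. norm (Dw x) \<le> c1"
    and c2_bound: "\<forall>x\<in>\<Omega>. norm (D2w x) \<le> c2"
  shows "\<forall>x\<in>\<Omega>. \<forall>p a b c d :: real^2. p \<noteq> 0 \<longrightarrow>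
      (let vl = sqrt (vbar^2 - c0^2);
           \<beta>0 = 14 * c1^2 / vl^3 + 4 * c2 / vl^2;
           \<beta>1 = 7 * c1 / vl^2;
           \<beta>2 = 4 / vl
       in \<bar>fcost2 vbar w x p (a, b) (c, d)\<bar>
          \<le> \<beta>0 * norm p * norm a * norm c
            + \<beta>1 * (norm a * norm d + norm b * norm c)
            + \<beta>2 * inverse (norm p) * norm b * norm d)"
  unfolding Let_def
  using c0_bound(1) c1_bound c2_bound
  by (blast intro: abs_fcost2_le[OF w_small[rule_format] w_d1[rule_format] w_d2[rule_format]
        vbar_pos _ c0_bound(2) _ _ refl])

end
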